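(* Let $J\subseteq[n]$ and let $w,w'\in W$ satisfy $W_Jw=W_Jw'$. Then for every $i\in\{0,1,\dots,n\}$ we have $W_J\,\sigma_i(w)=W_J\,\sigma_i(w')$.
   Context: Let $\Phi$ be an irreducible (crystallographic) root system of rank $n$ with simple roots $\alpha_1,\dots,\alpha_n$, and let $\alpha_0$ be the highest root with respect to this simple system. For $i\in\{0,\dots,n\}$ let $t_i$ be the reflection in the hyperplane orthogonal to $\alpha_i$. The Weyl group $W$ is generated by $t_1,\dots,t_n$, and $\ell$ is the length function with respect to $t_1,\dots,t_n$. For $w\in W$ and $1\le i\le n$, $\sigma_i(w)=w$ if $\ell(wt_i)>\ell(w)$ and $\sigma_i(w)=wt_i$ otherwise; $\sigma_0(w)=w$ if $\ell(wt_0)<\ell(w)$ and $\sigma_0(w)=wt_0$ otherwise. For $J\subseteq[n]$ (so $0\notin J$), $W_J$ is the subgroup of $W$ generated by $\{t_j:j\in J\}$, and $W_Jw$ denotes a right coset. *)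

theory Defs
  imports "HOL-Analysis.Analysis"
begin

definition rrefl :: "'a::real_inner \<Rightarrow> 'a \<Rightarrow> 'a" where
  "rrefl a x = x - ((2 * (x \<bullet> a)) / (a \<bullet> a)) *\<^sub>R a"

definition crystallographic_root_system :: "'a::euclidean_space set \<Rightarrow> bool" where
  "crystallographic_root_system Phi \<longleftrightarrow>
     finite Phi \<and> 0 \<notin> Phi \<and> span Phi = UNIV \<and>
     (\<forall>a\<in>Phi. \<forall>b\<in>Phi. rrefl a b \<in> Phi) \<and>
     (\<forall>a\<in>Phi. \<forall>b\<in>Phi. 2 * (b \<bullet> a) / (a \<bullet> a) \<in> \<int>) \<and>
     (\<forall>a\<in>Phi. \<forall>c. c *\<^sub>R a \<in> Phi \<longrightarrow> c = 1 \<or> c = -1)"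

definition irreducible_root_system :: "'a::euclidean_space set \<Rightarrow> bool" where
  "irreducible_root_system Phi \<longleftrightarrow>
     \<not> (\<exists>A B. A \<noteq> {} \<and> B \<noteq> {} \<and> A \<inter> B = {} \<and> A \<union> B = Phi \<and>
              (\<forall>a\<in>A. \<forall>b\<in>B. a \<bullet> b = 0))"

definition simple_system :: "'a::euclidean_space set \<Rightarrow> (nat \<Rightarrow> 'a) \<Rightarrow> bool" where
  "simple_system Phi alpha \<longleftrightarrow>
     inj_on alpha {1..DIM('a)} \<and> alpha ` {1..DIM('a)} \<subseteq> Phi \<and>
     independent (alpha ` {1..DIM('a)}) \<and>
     (\<forall>b\<in>Phi. \<exists>c::nat \<Rightarrow> int.
        b = (\<Sum>i=1..DIM('a). of_int (c i) *\<^sub>R alpha i) \<and>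
        ((\<forall>i\<in>{1..DIM('a)}. c i \<ge> 0) \<or> (\<forall>i\<in>{1..DIM('a)}. c i \<le> 0)))"

definition highest_root :: "'a::euclidean_space set \<Rightarrow> (nat \<Rightarrow> 'a) \<Rightarrow> 'a \<Rightarrow> bool" where
  "highest_root Phi alpha h \<longleftrightarrow> h \<in> Phi \<and>
     (\<forall>b\<in>Phi. \<exists>c::nat \<Rightarrow> int.
        h - b = (\<Sum>i=1..DIM('a). of_int (c i) *\<^sub>R alpha i) \<and> (\<forall>i\<in>{1..DIM('a)}. c i \<ge> 0))"

definition simple_refls :: "(nat \<Rightarrow> 'a::real_inner) \<Rightarrow> nat set \<Rightarrow> ('a \<Rightarrow> 'a) set" where
  "simple_refls alpha J = (\<lambda>i. rrefl (alpha i)) ` J"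

text \<open>Group generated by a set of involutions (all finite products).\<close>
definition gen_by :: "('a \<Rightarrow> 'a) set \<Rightarrow> ('a \<Rightarrow> 'a) set" where
  "gen_by S = {foldr (\<circ>) fs id | fs. set fs \<subseteq> S}"

definition weyl_group :: "(nat \<Rightarrow> 'a::euclidean_space) \<Rightarrow> ('a \<Rightarrow> 'a) set" where
  "weyl_group alpha = gen_by (simple_refls alpha {1..DIM('a)})"

definition parabolic :: "(nat \<Rightarrow> 'a::euclidean_space) \<Rightarrow> nat set \<Rightarrow> ('a \<Rightarrow> 'a) set" where
  "parabolic alpha J = gen_by (simple_refls alpha J)"

definition wlen :: "(nat \<Rightarrow> 'a::euclidean_space) \<Rightarrow> ('a \<Rightarrow> 'a) \<Rightarrow> nat" where
  "wlen alpha w = (LEAST k. \<exists>fs. set fs \<subseteq> simple_refls alpha {1..DIM('a)} \<and>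
                          length fs = k \<and> foldr (\<circ>) fs id = w)"

text \<open>sigma_i; here alpha 0 is the highest root and t_i = rrefl (alpha i); w t_i = w \<circ> t_i.\<close>
definition sigma :: "(nat \<Rightarrow> 'a::euclidean_space) \<Rightarrow> nat \<Rightarrow> ('a \<Rightarrow> 'a) \<Rightarrow> ('a \<Rightarrow> 'a)" where
  "sigma alpha i w =
     (if i = 0 then (if wlen alpha (w \<circ> rrefl (alpha 0)) < wlen alpha w then w else w \<circ> rrefl (alpha 0))
      else (if wlen alpha (w \<circ> rrefl (alpha i)) > wlen alpha w then w else w \<circ> rrefl (alpha i)))"

definition right_coset :: "(nat \<Rightarrow> 'a::euclidean_space) \<Rightarrow> nat set \<Rightarrow> ('a \<Rightarrow> 'a) \<Rightarrow> ('a \<Rightarrow> 'a) set" where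
  "right_coset alpha J w = (\<lambda>u. u \<circ> w) ` parabolic alpha J"

end

theory Submission
  imports Defs
begin

text \<open>
  Write \<open>w' = u w\<close> with \<open>u \<in> W\<^sub>J\<close> and put \<open>\<beta> = w \<alpha>\<^sub>i\<close>; since \<open>\<alpha>\<^sub>0\<close> is the highest root,
  \<open>\<alpha>\<^sub>i\<close> is positive for every \<open>i\<close>. The deletion (exchange) argument shows that
  \<open>\<ell>(w t\<^sub>\<gamma>) < \<ell>(w)\<close> exactly when \<open>w \<gamma>\<close> is negative, for every positive root \<open>\<gamma>\<close>, so
  \<open>\<sigma>\<^sub>i(w)\<close> is \<open>w\<close> or \<open>w t\<^sub>i\<close> according to the sign of \<open>\<beta>\<close>, and \<open>\<sigma>\<^sub>i(w')\<close> according to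
  the sign of \<open>u \<beta>\<close>. If the two signs agree, both sides are multiplied by the same element
  on the right. Otherwise \<open>u \<in> W\<^sub>J\<close> changes the sign of \<open>\<beta>\<close>, and the same deletion argument,
  applied to a word for \<open>u\<close> in the generators of \<open>W\<^sub>J\<close>, puts \<open>t\<^sub>\<beta>\<close> into \<open>W\<^sub>J\<close>; as
  \<open>w t\<^sub>i = t\<^sub>\<beta> w\<close>, the elements \<open>w\<close>, \<open>w t\<^sub>i\<close>, \<open>w'\<close>, \<open>w' t\<^sub>i\<close> then all lie in one coset.
\<close>

section \<open>Reflections and products of simple reflections\<close>

text \<open>The reflection lemmas also hold for \<open>a = 0\<close>: then \<open>rrefl a = id\<close>, as division by zero yields zero.\<close>

lemma orthogonal_transformation_rrefl: "orthogonal_transformation (rrefl a)"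
  unfolding orthogonal_transformation_def
proof
  show "linear (rrefl a)"
    by (rule linearI) (simp_all add: rrefl_def add_divide_distrib algebra_simps)
  show "\<forall>x y. rrefl a x \<bullet> rrefl a y = x \<bullet> y"
    by (cases "a = 0") (simp_all add: rrefl_def inner_diff_left inner_diff_right algebra_simps inner_commute)
qed

lemma rrefl_self: "rrefl a a = - a"
  by (cases "a = 0") (simp_all add: rrefl_def algebra_simps scaleR_2)

lemma rrefl_rrefl [simp]: "rrefl a (rrefl a x) = x"
  by (cases "a = 0") (simp_all add: rrefl_def algebra_simps diff_divide_distrib)

lemma rrefl_comp_rrefl [simp]: "rrefl a \<circ> rrefl a = id"
  by auto

lemma rrefl_uminus: "rrefl (- a) = rrefl a"
  by (auto simp: rrefl_def)

lemma orthogonal_transformation_rrefl_conj: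
  assumes "orthogonal_transformation v"
  shows "v \<circ> rrefl b = rrefl (v b) \<circ> v"
  using assms
  by (auto simp: rrefl_def orthogonal_transformation_def linear_diff linear_scale)

definition word_prod :: "(nat \<Rightarrow> 'a::real_inner) \<Rightarrow> nat list \<Rightarrow> 'a \<Rightarrow> 'a" where
  "word_prod alpha js = foldr (\<circ>) (map (\<lambda>j. rrefl (alpha j)) js) id"

lemma word_prod_Nil [simp]: "word_prod alpha [] = id"
  by (simp add: word_prod_def)

lemma word_prod_Cons [simp]: "word_prod alpha (j # js) = rrefl (alpha j) \<circ> word_prod alpha js"
  by (simp add: word_prod_def)

lemma word_prod_append: "word_prod alpha (is @ js) = word_prod alpha is \<circ> word_prod alpha js"
  by (induction "is") (auto simp: o_assoc)

lemma word_prod_rev_comp [simp]: "word_prod alpha (rev js) \<circ> word_prod alpha js = id"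
  by (induction js) (simp_all add: word_prod_append fun_eq_iff)

lemma orthogonal_transformation_word_prod: "orthogonal_transformation (word_prod alpha js)"
proof (induction js)
  case (Cons j js)
  show ?case
    unfolding word_prod_Cons
    by (rule orthogonal_transformation_compose[OF orthogonal_transformation_rrefl Cons.IH])
qed (simp add: id_def)

lemma simple_refl_lists_eq:
  "{fs. set fs \<subseteq> simple_refls alpha A} = map (\<lambda>j. rrefl (alpha j)) ` {js. set js \<subseteq> A}"
  using lists_image[of "\<lambda>j. rrefl (alpha j)" A] by (simp add: simple_refls_def lists_eq_set)

lemma parabolic_eq: "parabolic alpha J = {word_prod alpha js | js. set js \<subseteq> J}"
proof -
  have "parabolic alpha J = (\<lambda>fs. foldr (\<circ>) fs id) ` {fs. set fs \<subseteq> simple_refls alpha J}"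
    unfolding parabolic_def gen_by_def by blast
  also have "\<dots> = {word_prod alpha js | js. set js \<subseteq> J}"
    unfolding simple_refl_lists_eq image_image word_prod_def by blast
  finally show ?thesis .
qed

lemma orthogonal_transformation_parabolic:
  "v \<in> parabolic alpha J \<Longrightarrow> orthogonal_transformation v"
  unfolding parabolic_eq using orthogonal_transformation_word_prod by blast

lemma parabolic_comp:
  assumes "f \<in> parabolic alpha J" and "g \<in> parabolic alpha J"
  shows "f \<circ> g \<in> parabolic alpha J"
proof -
  obtain ks js where "set ks \<subseteq> J" "f = word_prod alpha ks" "set js \<subseteq> J" "g = word_prod alpha js"
    using assms unfolding parabolic_eq by blast
  then show ?thesis
    unfolding parabolic_eq by (intro CollectI exI[of _ "ks @ js"]) (simp add: word_prod_append)
qed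

lemma parabolic_inverse:
  assumes "g \<in> parabolic alpha J"
  obtains h where "h \<in> parabolic alpha J" "h \<circ> g = id"
proof -
  obtain js where "set js \<subseteq> J" "g = word_prod alpha js"
    using assms unfolding parabolic_eq by blast
  moreover have "word_prod alpha (rev js) \<in> parabolic alpha J"
    using \<open>set js \<subseteq> J\<close> unfolding parabolic_eq by (intro CollectI exI[of _ "rev js"]) auto
  ultimately show ?thesis
    using that by auto
qed

lemma parabolic_mono: "J \<subseteq> K \<Longrightarrow> parabolic alpha J \<subseteq> parabolic alpha K"
  unfolding parabolic_eq by blast

lemma weyl_group_eq_parabolic: "weyl_group alpha = parabolic alpha {1..DIM('a)}"
  for alpha :: "nat \<Rightarrow> 'a::euclidean_space"
  by (simp add: weyl_group_def parabolic_def)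

lemma wlen_eq:
  "wlen alpha w = (LEAST k. \<exists>js. set js \<subseteq> {1..DIM('a)} \<and> length js = k \<and> word_prod alpha js = w)"
  for alpha :: "nat \<Rightarrow> 'a::euclidean_space"
proof -
  have "(\<exists>fs\<in>{fs. set fs \<subseteq> simple_refls alpha {1..DIM('a)}}. length fs = k \<and> foldr (\<circ>) fs id = w)
    \<longleftrightarrow> (\<exists>js\<in>{js. set js \<subseteq> {1..DIM('a)}}. length js = k \<and> word_prod alpha js = w)" for k
    unfolding simple_refl_lists_eq word_prod_def by simp
  then show ?thesis
    unfolding wlen_def by simp
qed

lemma wlen_word_prod_le: "set js \<subseteq> {1..DIM('a)} \<Longrightarrow> wlen alpha (word_prod alpha js) \<le> length js"
  for alpha :: "nat \<Rightarrow> 'a::euclidean_space"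
  unfolding wlen_eq by (rule Least_le) blast

lemma obtain_reduced_word:
  fixes alpha :: "nat \<Rightarrow> 'a::euclidean_space"
  assumes "w \<in> weyl_group alpha"
  obtains js where "set js \<subseteq> {1..DIM('a)}" "length js = wlen alpha w" "word_prod alpha js = w"
proof -
  have "\<exists>k js. set js \<subseteq> {1..DIM('a)} \<and> length js = k \<and> word_prod alpha js = w"
    using assms unfolding weyl_group_eq_parabolic parabolic_eq by blast
  from LeastI_ex[OF this] show ?thesis using that unfolding wlen_eq by blast
qed

lemma id_in_parabolic: "id \<in> parabolic alpha J"
  unfolding parabolic_eq by (intro CollectI exI[of _ "[]"]) simp

lemma right_coset_self: "x \<in> right_coset alpha J x"
  unfolding right_coset_def by (rule image_eqI[of _ _ id]) (simp_all add: id_in_parabolic)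

lemma parabolic_comp_right_coset:
  assumes "g \<in> parabolic alpha J"
  shows "right_coset alpha J (g \<circ> x) = right_coset alpha J x"
proof -
  obtain h where h: "h \<in> parabolic alpha J" "h \<circ> g = id"
    using assms by (rule parabolic_inverse)
  have "(\<lambda>u. u \<circ> g) ` parabolic alpha J = parabolic alpha J"
  proof (intro equalityI subsetI)
    fix f assume "f \<in> (\<lambda>u. u \<circ> g) ` parabolic alpha J"
    then show "f \<in> parabolic alpha J" using assms parabolic_comp by blast
  next
    fix f assume "f \<in> parabolic alpha J"
    then have "f \<circ> h \<in> parabolic alpha J" and "f = (f \<circ> h) \<circ> g"
      using h parabolic_comp by (auto simp flip: o_assoc)
    then show "f \<in> (\<lambda>u. u \<circ> g) ` parabolic alpha J" by blast
  qed
  moreover have "(\<lambda>u. u \<circ> (g \<circ> x)) ` parabolic alpha J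
      = (\<lambda>u. u \<circ> x) ` ((\<lambda>u. u \<circ> g) ` parabolic alpha J)"
    by (simp add: image_image o_assoc)
  ultimately show ?thesis
    unfolding right_coset_def by simp
qed

section \<open>Positive roots\<close>

lemma sum_scaleR_indicator:
  fixes f :: "'b \<Rightarrow> 'a::real_vector"
  assumes "finite A" and "j \<in> A"
  shows "(\<Sum>k\<in>A. (if k = j then x else 0) *\<^sub>R f k) = x *\<^sub>R f j"
proof -
  have "(\<Sum>k\<in>A. (if k = j then x else 0) *\<^sub>R f k) = (\<Sum>k\<in>A. if k = j then x *\<^sub>R f k else 0)"
    by (intro sum.cong) auto
  then show ?thesis
    using assms by simp
qed

lemma sum_scaleR_add_indicator:
  fixes f :: "'b \<Rightarrow> 'a::real_vector" and c :: "'b \<Rightarrow> int"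
  assumes "finite A" and "j \<in> A"
  shows "(\<Sum>k\<in>A. of_int (c k + (if k = j then 1 else 0)) *\<^sub>R f k) = (\<Sum>k\<in>A. of_int (c k) *\<^sub>R f k) + f j"
  using sum_scaleR_indicator[OF assms, of 1 f]
  by (simp add: scaleR_add_left sum.distrib if_distrib[of real_of_int] cong: if_cong)

locale root_system =
  fixes Phi :: "'a::euclidean_space set" and alpha :: "nat \<Rightarrow> 'a"
  assumes crystallographic: "crystallographic_root_system Phi"
    and simple: "simple_system Phi alpha"
begin

lemma zero_notin_roots: "0 \<notin> Phi"
  using crystallographic unfolding crystallographic_root_system_def by blast

lemma rrefl_root: "a \<in> Phi \<Longrightarrow> b \<in> Phi \<Longrightarrow> rrefl a b \<in> Phi"
  using crystallographic unfolding crystallographic_root_system_def by blast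

lemma uminus_root: "b \<in> Phi \<Longrightarrow> - b \<in> Phi"
  using rrefl_root[of b b] by (simp add: rrefl_self)

lemma cartan_integer: "a \<in> Phi \<Longrightarrow> b \<in> Phi \<Longrightarrow> 2 * (b \<bullet> a) / (a \<bullet> a) \<in> \<int>"
  using crystallographic unfolding crystallographic_root_system_def by blast

lemma root_multiple: "a \<in> Phi \<Longrightarrow> c *\<^sub>R a \<in> Phi \<Longrightarrow> c = 1 \<or> c = -1"
  using crystallographic unfolding crystallographic_root_system_def by blast

lemma simple_root: "j \<in> {1..DIM('a)} \<Longrightarrow> alpha j \<in> Phi"
  using simple unfolding simple_system_def by blast

lemma simple_coeffs_unique:
  assumes "(\<Sum>j\<in>{1..DIM('a)}. c j *\<^sub>R alpha j) = (\<Sum>j\<in>{1..DIM('a)}. d j *\<^sub>R alpha j)"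
    and "j \<in> {1..DIM('a)}"
  shows "c j = d j"
proof -
  have inj: "inj_on alpha {1..DIM('a)}" and indep: "independent (alpha ` {1..DIM('a)})"
    using simple unfolding simple_system_def by auto
  define u where "u v = c (inv_into {1..DIM('a)} alpha v) - d (inv_into {1..DIM('a)} alpha v)" for v
  have "(\<Sum>v\<in>alpha ` {1..DIM('a)}. u v *\<^sub>R v) = (\<Sum>j\<in>{1..DIM('a)}. u (alpha j) *\<^sub>R alpha j)"
    by (rule sum.reindex[OF inj, unfolded o_def])
  also have "\<dots> = (\<Sum>j\<in>{1..DIM('a)}. (c j - d j) *\<^sub>R alpha j)"
    using inv_into_f_f[OF inj] by (intro sum.cong refl) (simp only: u_def)
  also have "\<dots> = 0"
    using assms(1) by (simp add: scaleR_diff_left sum_subtractf)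
  finally have "u (alpha j) = 0"
    using indep assms(2) dependent_explicit[of "alpha ` {1..DIM('a)}"] by blast
  then show ?thesis
    using inv_into_f_f[OF inj assms(2)] by (simp add: u_def)
qed

lemma word_prod_root: "set js \<subseteq> {1..DIM('a)} \<Longrightarrow> b \<in> Phi \<Longrightarrow> word_prod alpha js b \<in> Phi"
proof (induction js)
  case (Cons j js)
  then show ?case
    using rrefl_root[OF simple_root] by simp
qed simp

lemma parabolic_root:
  "J \<subseteq> {1..DIM('a)} \<Longrightarrow> u \<in> parabolic alpha J \<Longrightarrow> b \<in> Phi \<Longrightarrow> u b \<in> Phi"
  unfolding parabolic_eq using word_prod_root by blast

lemma weyl_group_root: "w \<in> weyl_group alpha \<Longrightarrow> b \<in> Phi \<Longrightarrow> w b \<in> Phi"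
  unfolding weyl_group_eq_parabolic by (rule parabolic_root) simp_all

definition positive_root :: "'a \<Rightarrow> bool" where
  "positive_root b \<longleftrightarrow> b \<in> Phi \<and>
     (\<exists>c::nat \<Rightarrow> int. b = (\<Sum>j\<in>{1..DIM('a)}. of_int (c j) *\<^sub>R alpha j) \<and> (\<forall>j\<in>{1..DIM('a)}. 0 \<le> c j))"

lemma positive_root_root: "positive_root b \<Longrightarrow> b \<in> Phi"
  by (simp add: positive_root_def)

lemma root_positive_or_negative:
  assumes "b \<in> Phi"
  shows "positive_root b \<or> positive_root (- b)"
proof -
  obtain c :: "nat \<Rightarrow> int" where c: "b = (\<Sum>j\<in>{1..DIM('a)}. of_int (c j) *\<^sub>R alpha j)"
    and "(\<forall>j\<in>{1..DIM('a)}. 0 \<le> c j) \<or> (\<forall>j\<in>{1..DIM('a)}. c j \<le> 0)"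
    using simple assms unfolding simple_system_def by blast
  moreover have "- b = (\<Sum>j\<in>{1..DIM('a)}. of_int (- c j) *\<^sub>R alpha j)"
    by (simp add: c sum_negf)
  ultimately show ?thesis
    using assms uminus_root unfolding positive_root_def by (metis neg_0_le_iff_le)
qed

lemma positive_root_not_negative:
  assumes "positive_root b"
  shows "\<not> positive_root (- b)"
proof
  assume "positive_root (- b)"
  then obtain d :: "nat \<Rightarrow> int" where d: "- b = (\<Sum>j\<in>{1..DIM('a)}. of_int (d j) *\<^sub>R alpha j)"
    and d_nonneg: "\<forall>j\<in>{1..DIM('a)}. 0 \<le> d j"
    unfolding positive_root_def by blast
  obtain c :: "nat \<Rightarrow> int" where c: "b = (\<Sum>j\<in>{1..DIM('a)}. of_int (c j) *\<^sub>R alpha j)"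
    and c_nonneg: "\<forall>j\<in>{1..DIM('a)}. 0 \<le> c j"
    using assms unfolding positive_root_def by blast
  have "(\<Sum>j\<in>{1..DIM('a)}. of_int (- d j) *\<^sub>R alpha j) = - (\<Sum>j\<in>{1..DIM('a)}. of_int (d j) *\<^sub>R alpha j)"
    by (simp add: sum_negf)
  also have "\<dots> = b"
    by (subst d[symmetric]) simp
  finally have eq: "(\<Sum>j\<in>{1..DIM('a)}. of_int (c j) *\<^sub>R alpha j)
      = (\<Sum>j\<in>{1..DIM('a)}. of_int (- d j) *\<^sub>R alpha j)"
    using c by simp
  have "c j = 0" if "j \<in> {1..DIM('a)}" for j
    using simple_coeffs_unique[OF eq that] c_nonneg d_nonneg that by force
  then have "b = 0"
    unfolding c by (intro sum.neutral) simp
  then show False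
    using assms positive_root_root zero_notin_roots by blast
qed

lemma positive_simple_root:
  assumes "j \<in> {1..DIM('a)}"
  shows "positive_root (alpha j)"
proof -
  have "alpha j = (\<Sum>k\<in>{1..DIM('a)}. of_int (0 + (if k = j then 1 else 0)) *\<^sub>R alpha k)"
    using sum_scaleR_add_indicator[of "{1..DIM('a)}" j "\<lambda>_. 0" alpha] assms by simp
  then show ?thesis
    unfolding positive_root_def using simple_root[OF assms] by (intro conjI exI) auto
qed

lemma positive_highest_root:
  assumes "highest_root Phi alpha h"
  shows "positive_root h"
proof -
  have one: "1 \<in> {1..DIM('a)}"
    using DIM_positive[where 'a='a] by simp
  obtain c :: "nat \<Rightarrow> int" where c: "h - alpha 1 = (\<Sum>j\<in>{1..DIM('a)}. of_int (c j) *\<^sub>R alpha j)"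
    and "\<forall>j\<in>{1..DIM('a)}. 0 \<le> c j" and "h \<in> Phi"
    using assms simple_root[OF one] unfolding highest_root_def by blast
  moreover have "h = (\<Sum>j\<in>{1..DIM('a)}. of_int (c j + (if j = 1 then 1 else 0)) *\<^sub>R alpha j)"
    using sum_scaleR_add_indicator[of "{1..DIM('a)}" 1 c alpha] one c by (simp add: diff_eq_eq)
  ultimately show ?thesis
    unfolding positive_root_def by (intro conjI exI[of _ "\<lambda>j. c j + (if j = 1 then 1 else 0)"]) auto
qed

lemma positive_multiple_simple_root:
  assumes i: "i \<in> {1..DIM('a)}" and pos: "positive_root (x *\<^sub>R alpha i)"
  shows "x = 1"
proof -
  have "x = 1 \<or> x = -1"
    using root_multiple[OF simple_root[OF i] positive_root_root[OF pos]] .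
  moreover have "\<not> positive_root (- alpha i)"
    using positive_root_not_negative[OF positive_simple_root[OF i]] .
  ultimately show ?thesis
    using pos by auto
qed

lemma positive_rrefl_simple:
  assumes i: "i \<in> {1..DIM('a)}" and b: "positive_root b" and ne: "b \<noteq> alpha i"
  shows "positive_root (rrefl (alpha i) b)"
proof (rule ccontr)
  assume "\<not> positive_root (rrefl (alpha i) b)"
  then have "positive_root (- rrefl (alpha i) b)"
    using root_positive_or_negative rrefl_root[OF simple_root[OF i] positive_root_root[OF b]] by blast
  then obtain d :: "nat \<Rightarrow> int" where d: "- rrefl (alpha i) b = (\<Sum>j\<in>{1..DIM('a)}. of_int (d j) *\<^sub>R alpha j)"
    and d_nonneg: "\<forall>j\<in>{1..DIM('a)}. 0 \<le> d j"
    unfolding positive_root_def by blast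
  obtain c :: "nat \<Rightarrow> int" where c: "b = (\<Sum>j\<in>{1..DIM('a)}. of_int (c j) *\<^sub>R alpha j)"
    and c_nonneg: "\<forall>j\<in>{1..DIM('a)}. 0 \<le> c j"
    using b unfolding positive_root_def by blast
  define k where "k = 2 * (b \<bullet> alpha i) / (alpha i \<bullet> alpha i)"
  have "(\<Sum>j\<in>{1..DIM('a)}. of_int (c j + d j) *\<^sub>R alpha j)
      = (\<Sum>j\<in>{1..DIM('a)}. of_int (c j) *\<^sub>R alpha j) + (\<Sum>j\<in>{1..DIM('a)}. of_int (d j) *\<^sub>R alpha j)"
    by (simp add: scaleR_add_left sum.distrib)
  also have "\<dots> = b - rrefl (alpha i) b"
    unfolding c[symmetric] d[symmetric] by simp
  also have "\<dots> = (\<Sum>j\<in>{1..DIM('a)}. (if j = i then k else 0) *\<^sub>R alpha j)"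
    using sum_scaleR_indicator[of "{1..DIM('a)}" i k alpha] i by (simp add: rrefl_def k_def)
  finally have eq: "(\<Sum>j\<in>{1..DIM('a)}. of_int (c j + d j) *\<^sub>R alpha j)
      = (\<Sum>j\<in>{1..DIM('a)}. (if j = i then k else 0) *\<^sub>R alpha j)" .
  have "c j = 0" if "j \<in> {1..DIM('a)}" "j \<noteq> i" for j
    using simple_coeffs_unique[OF eq that(1)] that c_nonneg d_nonneg by force
  then have "b = (\<Sum>j\<in>{1..DIM('a)}. (if j = i then of_int (c i) else 0) *\<^sub>R alpha j)"
    unfolding c by (intro sum.cong) auto
  also have "\<dots> = of_int (c i) *\<^sub>R alpha i"
    by (rule sum_scaleR_indicator[OF _ i]) simp
  finally show False
    using positive_multiple_simple_root[OF i] b ne by force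
qed

section \<open>The deletion property and its consequences\<close>

lemma word_prod_comp_rrefl_deletion:
  assumes "set js \<subseteq> {1..DIM('a)}" and "positive_root b" and "positive_root (- word_prod alpha js b)"
  shows "\<exists>js'. set js' \<subseteq> set js \<and> length js' < length js \<and> word_prod alpha js \<circ> rrefl b = word_prod alpha js'"
  using assms
proof (induction js)
  case Nil
  then show ?case
    using positive_root_not_negative by simp
next
  case (Cons j js)
  then have j: "j \<in> {1..DIM('a)}" and js: "set js \<subseteq> {1..DIM('a)}" by auto
  show ?case
  proof (cases "positive_root (- word_prod alpha js b)")
    case True
    then obtain js' where "set js' \<subseteq> set js" "length js' < length js"
      "word_prod alpha js \<circ> rrefl b = word_prod alpha js'"
      using Cons.IH js Cons.prems(2) by blast
    then show ?thesis
      by (intro exI[of _ "j # js'"]) (auto simp: fun_eq_iff)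
  next
    case False
    let ?c = "word_prod alpha js b"
    have "positive_root ?c"
      using False root_positive_or_negative word_prod_root[OF js positive_root_root[OF Cons.prems(2)]]
      by blast
    moreover have "positive_root (- rrefl (alpha j) ?c)"
      using Cons.prems(3) by simp
    ultimately have c: "?c = alpha j"
      using positive_rrefl_simple[OF j] positive_root_not_negative by blast
    have "word_prod alpha js \<circ> rrefl b = rrefl ?c \<circ> word_prod alpha js"
      by (rule orthogonal_transformation_rrefl_conj[OF orthogonal_transformation_word_prod])
    then have "word_prod alpha (j # js) \<circ> rrefl b = rrefl (alpha j) \<circ> rrefl ?c \<circ> word_prod alpha js"
      by (simp only: word_prod_Cons flip: o_assoc)
    also have "\<dots> = word_prod alpha js"
      by (simp add: c)
    finally have "word_prod alpha (j # js) \<circ> rrefl b = word_prod alpha js" .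
    moreover have "set js \<subseteq> set (j # js)" and "length js < length (j # js)"
      by auto
    ultimately show ?thesis
      by blast
  qed
qed

lemma positive_root_inner_simple:
  assumes "positive_root b"
  obtains i where "i \<in> {1..DIM('a)}" and "0 < b \<bullet> alpha i"
proof (rule ccontr)
  assume "\<not> thesis"
  then have le: "\<forall>i\<in>{1..DIM('a)}. b \<bullet> alpha i \<le> 0"
    using that by force
  obtain c :: "nat \<Rightarrow> int" where c: "b = (\<Sum>j\<in>{1..DIM('a)}. of_int (c j) *\<^sub>R alpha j)"
    and c_nonneg: "\<forall>j\<in>{1..DIM('a)}. 0 \<le> c j"
    using assms unfolding positive_root_def by blast
  have "b \<bullet> b = (\<Sum>j\<in>{1..DIM('a)}. of_int (c j) * (b \<bullet> alpha j))"
    by (subst (2) c) (simp add: inner_sum_right)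
  also have "\<dots> \<le> 0"
    using le c_nonneg by (intro sum_nonpos) (simp add: mult_nonneg_nonpos)
  finally have "b = 0"
    by (metis inner_gt_zero_iff not_le)
  then show False
    using assms positive_root_root zero_notin_roots by blast
qed

lemma rrefl_simple_lowers_height:
  fixes h :: "'a \<Rightarrow> real"
  assumes h: "linear h" "\<forall>j\<in>{1..DIM('a)}. h (alpha j) = 1"
    and i: "i \<in> {1..DIM('a)}" and b: "b \<in> Phi" and inner: "0 < b \<bullet> alpha i"
  shows "h (rrefl (alpha i) b) \<le> h b - 1"
proof -
  define k where "k = 2 * (b \<bullet> alpha i) / (alpha i \<bullet> alpha i)"
  have "k \<in> \<int>"
    unfolding k_def by (rule cartan_integer[OF simple_root[OF i] b])
  moreover have "0 < k"
    unfolding k_def using inner simple_root[OF i] zero_notin_roots by (auto intro!: divide_pos_pos)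
  ultimately have "1 \<le> k"
    by (auto elim!: Ints_cases)
  moreover have "h (rrefl (alpha i) b) = h b - k"
    using h i by (simp add: rrefl_def k_def linear_diff linear_scale)
  ultimately show ?thesis
    by simp
qed

text \<open>\<open>h\<close> is the height: the sum of the coordinates with respect to the simple roots.\<close>

lemma obtain_height:
  obtains h :: "'a \<Rightarrow> real"
  where "linear h" "\<forall>j\<in>{1..DIM('a)}. h (alpha j) = 1" "\<And>b. positive_root b \<Longrightarrow> 0 \<le> h b"
proof -
  have "independent (alpha ` {1..DIM('a)})"
    using simple unfolding simple_system_def by blast
  then obtain h :: "'a \<Rightarrow> real" where h: "linear h" "\<forall>j\<in>{1..DIM('a)}. h (alpha j) = 1"
    using linear_independent_extend[of "alpha ` {1..DIM('a)}" "\<lambda>_. 1"] by auto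
  have h_nonneg: "0 \<le> h b" if b: "positive_root b" for b
  proof -
    obtain c :: "nat \<Rightarrow> int" where "b = (\<Sum>j\<in>{1..DIM('a)}. of_int (c j) *\<^sub>R alpha j)"
      and "\<forall>j\<in>{1..DIM('a)}. 0 \<le> c j"
      using b unfolding positive_root_def by blast
    then show ?thesis
      using h by (auto simp: linear_sum[OF h(1)] linear_scale[OF h(1)] intro!: sum_nonneg)
  qed
  show ?thesis
    using h h_nonneg by (rule that)
qed

lemma exists_word_negating_positive_root:
  assumes "positive_root b"
  shows "\<exists>js. set js \<subseteq> {1..DIM('a)} \<and> positive_root (- word_prod alpha js b)"
proof -
  obtain h :: "'a \<Rightarrow> real" where h: "linear h" "\<forall>j\<in>{1..DIM('a)}. h (alpha j) = 1"
    and h_nonneg: "\<And>b. positive_root b \<Longrightarrow> 0 \<le> h b"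
    using obtain_height by metis
  have "\<exists>js. set js \<subseteq> {1..DIM('a)} \<and> positive_root (- word_prod alpha js b)"
    if "positive_root b" and "h b < real m" for b m
    using that
  proof (induction m arbitrary: b)
    case 0
    then show ?case
      using h_nonneg by force
  next
    case (Suc m)
    show ?case
    proof (cases "\<exists>i\<in>{1..DIM('a)}. b = alpha i")
      case True
      then obtain i where i: "i \<in> {1..DIM('a)}" "b = alpha i"
        by blast
      then have "positive_root (- word_prod alpha [i] b)"
        using positive_simple_root by (simp add: rrefl_self)
      then show ?thesis
        using i by (intro exI[of _ "[i]"]) simp
    next
      case False
      obtain i where i: "i \<in> {1..DIM('a)}" and "0 < b \<bullet> alpha i"
        using positive_root_inner_simple[OF Suc.prems(1)] .
      then have "h (rrefl (alpha i) b) < real m"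
        using rrefl_simple_lowers_height[OF h i positive_root_root[OF Suc.prems(1)]] Suc.prems(2) by simp
      moreover have "positive_root (rrefl (alpha i) b)"
        using positive_rrefl_simple[OF i Suc.prems(1)] False i by blast
      ultimately obtain js where "set js \<subseteq> {1..DIM('a)}"
        and "positive_root (- word_prod alpha js (rrefl (alpha i) b))"
        using Suc.IH by blast
      then show ?thesis
        using i by (intro exI[of _ "js @ [i]"]) (simp add: word_prod_append)
    qed
  qed
  moreover obtain m :: nat where "h b < real m"
    using reals_Archimedean2 by blast
  ultimately show ?thesis
    using assms by blast
qed

lemma rrefl_in_parabolic:
  assumes J: "J \<subseteq> {1..DIM('a)}" and u: "u \<in> parabolic alpha J"
    and b: "positive_root b" and ub: "positive_root (- u b)"
  shows "rrefl b \<in> parabolic alpha J"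
proof -
  obtain js where js: "set js \<subseteq> J" "u = word_prod alpha js"
    using u unfolding parabolic_eq by blast
  then obtain js' where js': "set js' \<subseteq> set js" "word_prod alpha js \<circ> rrefl b = word_prod alpha js'"
    using word_prod_comp_rrefl_deletion[of js b] J b ub by blast
  have "rrefl b = word_prod alpha (rev js) \<circ> word_prod alpha js \<circ> rrefl b"
    by simp
  also have "\<dots> = word_prod alpha (rev js @ js')"
    using js' by (simp only: word_prod_append flip: o_assoc)
  finally show ?thesis
    using js js' unfolding parabolic_eq by (intro CollectI exI[of _ "rev js @ js'"]) auto
qed

text \<open>This is what makes \<open>w t\<^sub>0\<close> an element of the Weyl group, although \<open>t\<^sub>0\<close> is not a generator.\<close>

lemma rrefl_in_weyl_group:
  assumes "positive_root b"
  shows "rrefl b \<in> weyl_group alpha"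
proof -
  obtain js where "set js \<subseteq> {1..DIM('a)}" "positive_root (- word_prod alpha js b)"
    using exists_word_negating_positive_root[OF assms] by blast
  moreover from this(1) have "word_prod alpha js \<in> parabolic alpha {1..DIM('a)}"
    unfolding parabolic_eq by blast
  ultimately show ?thesis
    unfolding weyl_group_eq_parabolic using rrefl_in_parabolic assms by blast
qed

lemma rrefl_in_parabolic_of_sign_change:
  assumes J: "J \<subseteq> {1..DIM('a)}" and u: "u \<in> parabolic alpha J"
    and b: "b \<in> Phi" and sign: "positive_root (- b) \<noteq> positive_root (- u b)"
  shows "rrefl b \<in> parabolic alpha J"
proof (cases "positive_root b")
  case True
  then show ?thesis
    using sign positive_root_not_negative rrefl_in_parabolic[OF J u] by blast
next
  case False
  then have "positive_root (- b)"
    using b root_positive_or_negative by blast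
  moreover have "u (- b) = - u b"
    using orthogonal_transformation_parabolic[OF u] by (simp add: orthogonal_transformation_linear linear_neg)
  then have "positive_root (- u (- b))"
    using \<open>positive_root (- b)\<close> sign root_positive_or_negative parabolic_root[OF J u b] by auto
  ultimately have "rrefl (- b) \<in> parabolic alpha J"
    by (rule rrefl_in_parabolic[OF J u])
  then show ?thesis
    by (simp add: rrefl_uminus)
qed

lemma wlen_comp_rrefl_less:
  assumes w: "w \<in> weyl_group alpha" and b: "positive_root b" and wb: "positive_root (- w b)"
  shows "wlen alpha (w \<circ> rrefl b) < wlen alpha w"
proof -
  obtain js where js: "set js \<subseteq> {1..DIM('a)}" "length js = wlen alpha w" "word_prod alpha js = w"
    using w by (rule obtain_reduced_word)
  then obtain js' where "set js' \<subseteq> set js" "length js' < length js" "w \<circ> rrefl b = word_prod alpha js'"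
    using word_prod_comp_rrefl_deletion[of js b] b wb by blast
  then show ?thesis
    using wlen_word_prod_le[of js' alpha] js by fastforce
qed

lemma wlen_less_comp_rrefl:
  assumes w: "w \<in> weyl_group alpha" and b: "positive_root b" and wb: "positive_root (w b)"
  shows "wlen alpha w < wlen alpha (w \<circ> rrefl b)"
proof -
  have "w \<circ> rrefl b \<in> weyl_group alpha"
    using w rrefl_in_weyl_group[OF b] unfolding weyl_group_eq_parabolic by (rule parabolic_comp)
  moreover have "positive_root (- (w \<circ> rrefl b) b)"
    using wb orthogonal_transformation_parabolic[OF w[unfolded weyl_group_eq_parabolic]]
    by (simp add: rrefl_self orthogonal_transformation_linear linear_neg)
  ultimately have "wlen alpha (w \<circ> rrefl b \<circ> rrefl b) < wlen alpha (w \<circ> rrefl b)"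
    by (rule wlen_comp_rrefl_less[OF _ b])
  then show ?thesis
    by (simp flip: o_assoc)
qed

section \<open>The maps \<open>\<sigma>\<^sub>i\<close> on right cosets\<close>

lemma sigma_eq:
  assumes w: "w \<in> weyl_group alpha" and i: "positive_root (alpha i)"
  shows "sigma alpha i w = (if (i = 0) = positive_root (- w (alpha i)) then w else w \<circ> rrefl (alpha i))"
proof -
  have "w (alpha i) \<in> Phi"
    using weyl_group_root[OF w positive_root_root[OF i]] .
  then consider "positive_root (w (alpha i))" | "positive_root (- w (alpha i))"
    using root_positive_or_negative by blast
  then show ?thesis
  proof cases
    case 1
    then show ?thesis
      using wlen_less_comp_rrefl[OF w i] positive_root_not_negative unfolding sigma_def by auto
  next
    case 2
    then show ?thesis
      using wlen_comp_rrefl_less[OF w i] unfolding sigma_def by auto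
  qed
qed

lemma right_coset_sigma_parabolic_comp:
  assumes J: "J \<subseteq> {1..DIM('a)}" and u: "u \<in> parabolic alpha J"
    and w: "w \<in> weyl_group alpha" and i: "positive_root (alpha i)"
  shows "right_coset alpha J (sigma alpha i (u \<circ> w)) = right_coset alpha J (sigma alpha i w)"
proof -
  have uw: "u \<circ> w \<in> weyl_group alpha"
    using parabolic_mono[OF J] u w parabolic_comp unfolding weyl_group_eq_parabolic by blast
  have g: "w (alpha i) \<in> Phi"
    using weyl_group_root[OF w positive_root_root[OF i]] .
  have coset: "right_coset alpha J (u \<circ> w) = right_coset alpha J w"
    using u by (rule parabolic_comp_right_coset)
  have coset_rrefl: "right_coset alpha J (u \<circ> w \<circ> rrefl (alpha i)) = right_coset alpha J (w \<circ> rrefl (alpha i))"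
    using parabolic_comp_right_coset[OF u] by (simp flip: o_assoc)
  show ?thesis
  proof (cases "positive_root (- w (alpha i)) = positive_root (- u (w (alpha i)))")
    case True
    then show ?thesis
      unfolding sigma_eq[OF uw i] sigma_eq[OF w i] using coset coset_rrefl by simp
  next
    case False
    then have "rrefl (w (alpha i)) \<in> parabolic alpha J"
      by (rule rrefl_in_parabolic_of_sign_change[OF J u g])
    moreover have "w \<circ> rrefl (alpha i) = rrefl (w (alpha i)) \<circ> w"
      using orthogonal_transformation_parabolic w unfolding weyl_group_eq_parabolic
      by (blast intro: orthogonal_transformation_rrefl_conj)
    ultimately have "right_coset alpha J (w \<circ> rrefl (alpha i)) = right_coset alpha J w"
      using parabolic_comp_right_coset by metis
    then show ?thesis
      unfolding sigma_eq[OF uw i] sigma_eq[OF w i] using coset coset_rrefl by simp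
  qed
qed

end

theorem proposition5:
  fixes Phi :: "'a::euclidean_space set" and alpha :: "nat \<Rightarrow> 'a"
    and J :: "nat set" and w w' :: "'a \<Rightarrow> 'a" and i :: nat
  assumes "crystallographic_root_system Phi"
    and "irreducible_root_system Phi"
    and "simple_system Phi alpha"
    and "highest_root Phi alpha (alpha 0)"
    and "J \<subseteq> {1..DIM('a)}"
    and "w \<in> weyl_group alpha" and "w' \<in> weyl_group alpha"
    and "right_coset alpha J w = right_coset alpha J w'"
    and "i \<le> DIM('a)"
  shows "right_coset alpha J (sigma alpha i w) = right_coset alpha J (sigma alpha i w')"
proof -
  interpret root_system Phi alpha
    using assms(1,3) by unfold_locales
  have i: "positive_root (alpha i)"
    using positive_simple_root positive_highest_root assms(4,9) by (cases "i = 0") auto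
  obtain u where "u \<in> parabolic alpha J" and "w' = u \<circ> w"
    using right_coset_self[of w' alpha J] assms(8) unfolding right_coset_def by auto
  then show ?thesis
    using right_coset_sigma_parabolic_comp[OF assms(5) _ assms(6) i] by simp
qed

end
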